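(* Let $\Omega$ be a finite set and let $P=(p_i)_{i\in\Omega}$ and $Q=(q_i)_{i\in\Omega}$ be probability distributions on $\Omega$, both with support $\Omega$. Let $(e_i)_{i\in\Omega}$ be independent $\mathrm{Exp}(1)$ random variables, and set $\tilde{x}=\arg\min_{i\in\Omega} e_i/q_i$ (the drafted token) and $x^{next}=\arg\min_{i\in\Omega} e_i/p_i$. Let $P_{accept}^{(1)}=\Pr[\tilde{x}=x^{next}]$ be the probability that the first drafted token is accepted in exponential race speculative decoding. Then $$1-D_{TV}[P,Q]\;\ge\; P_{accept}^{(1)}\;\ge\; D_{HM}[P,Q],$$ where $D_{TV}[P,Q]=\frac12\sum_{i\in\Omega}|p_i-q_i|$ and $D_{HM}[P,Q]=\sum_{i\in\Omega}\frac{p_iq_i}{p_i+q_i}$.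
   Context: In exponential race speculative decoding, given the context, the draft model's next-token distribution is $Q$ and the target model's next-token distribution is $P$; one drafts the winner of the exponential race under $Q$ and accepts it iff it is also the winner of the race under $P$ driven by the same exponential variables $(e_i)$. *)

theory Defs
  imports "HOL-Probability.Probability"
begin

definition exp_race_space :: "'a set \<Rightarrow> ('a \<Rightarrow> real) measure" where
  "exp_race_space \<Omega> = PiM \<Omega> (\<lambda>_. density lborel (exponential_density 1))"

definition P_accept1 :: "'a set \<Rightarrow> ('a \<Rightarrow> real) \<Rightarrow> ('a \<Rightarrow> real) \<Rightarrow> real" where
  "P_accept1 \<Omega> p q = measure (exp_race_space \<Omega>)
     {e \<in> space (exp_race_space \<Omega>).
        arg_min_on (\<lambda>i. e i / q i) \<Omega> = arg_min_on (\<lambda>i. e i / p i) \<Omega>}"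

definition D_TV :: "'a set \<Rightarrow> ('a \<Rightarrow> real) \<Rightarrow> ('a \<Rightarrow> real) \<Rightarrow> real" where
  "D_TV \<Omega> p q = (1/2) * (\<Sum>i\<in>\<Omega>. \<bar>p i - q i\<bar>)"

definition D_HM :: "'a set \<Rightarrow> ('a \<Rightarrow> real) \<Rightarrow> ('a \<Rightarrow> real) \<Rightarrow> real" where
  "D_HM \<Omega> p q = (\<Sum>i\<in>\<Omega>. p i * q i / (p i + q i))"

end

theory Submission
  imports Defs
begin

(* Write r^w_i = e_i / w_i.  Index i wins the race argmin r^w strictly iff
   e_j > (w_j / w_i) e_i for all j ~= i; conditioning on e_i and integrating the
   exponential tails, this has probability 1 / (1 + sum_{j~=i} w_j / w_i) = w_i,
   so almost surely some index wins strictly.  Hence, up to a null set, the draft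
   is accepted iff one index i wins both races, i.e. iff
   e_j > max (p_j / p_i) (q_j / q_i) e_i for all j ~= i, which has probability
   1 / (1 + sum_{j~=i} max (p_j / p_i) (q_j / q_i)).  Bounding the max below by
   either ratio bounds this by min p_i q_i, whose sum is 1 - D_TV; bounding it
   above by the sum of both ratios gives at least p_i q_i / (p_i + q_i). *)

lemma emeasure_exponential_density_greaterThan:
  assumes "0 < l" "0 \<le> a"
  shows "emeasure (density lborel (exponential_density l)) {a<..} = exp (- a * l)"
proof -
  interpret prob_space "density lborel (exponential_density l)"
    using \<open>0 < l\<close> by (rule prob_space_exponential_density)
  have "distributed (density lborel (exponential_density l)) lborel (\<lambda>x. x) (exponential_density l)"
    by (auto simp: distributed_def distr_id2 intro!: distr_cong[THEN trans])
  from exponential_distributedD_gt[OF this assms(2,1)] show ?thesis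
    by (simp add: emeasure_eq_measure greaterThan_def)
qed

lemma nn_integral_exp_exponential_density:
  assumes "0 < l" "0 \<le> c"
  shows "(\<integral>\<^sup>+t. exp (- c * t) \<partial>density lborel (exponential_density l)) = ennreal (l / (l + c))"
proof -
  have "0 < l + c" using assms by simp
  have "exponential_density l t * exp (- c * t) = l / (l + c) * exponential_density (l + c) t" for t
    using \<open>0 < l + c\<close> by (simp add: exponential_density_def field_simps flip: exp_add)
  then have "(\<integral>\<^sup>+t. exp (- c * t) \<partial>density lborel (exponential_density l))
      = (\<integral>\<^sup>+t. ennreal (l / (l + c)) * exponential_density (l + c) t \<partial>lborel)"
    using assms by (subst nn_integral_density)
      (auto simp: exponential_density_nonneg simp flip: ennreal_mult' intro!: nn_integral_cong)
  also have "\<dots> = ennreal (l / (l + c)) * emeasure (density lborel (exponential_density (l + c))) UNIV"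
    by (subst nn_integral_cmult) (auto simp: emeasure_density)
  also have "\<dots> = l / (l + c)"
    using prob_space.emeasure_space_1[OF prob_space_exponential_density[OF \<open>0 < l + c\<close>]] by simp
  finally show ?thesis .
qed

lemma sum_others_div:
  fixes w :: "'a \<Rightarrow> real"
  assumes "finite \<Omega>" "i \<in> \<Omega>" "(\<Sum>j\<in>\<Omega>. w j) = 1" "w i \<noteq> 0"
  shows "(\<Sum>j\<in>\<Omega>-{i}. w j / w i) = 1 / w i - 1"
  using assms by (simp add: sum_diff1 diff_divide_distrib flip: sum_divide_distrib)

lemma arg_min_on_eq_strict_min:
  fixes f :: "'a \<Rightarrow> 'b::order"
  assumes "i \<in> S" "\<And>j. j \<in> S \<Longrightarrow> j \<noteq> i \<Longrightarrow> f i < f j"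
  shows "arg_min_on f S = i"
  unfolding arg_min_on_def arg_min_def is_arg_min_def
  using assms by (intro some_equality) (auto dest: less_asym)

lemma pred_arg_min_on_eq:
  fixes f g :: "'i \<Rightarrow> 'm \<Rightarrow> 'c::{linorder_topology, second_countable_topology}"
  assumes "finite I"
    and f: "\<And>i. i \<in> I \<Longrightarrow> f i \<in> borel_measurable M" and g: "\<And>i. i \<in> I \<Longrightarrow> g i \<in> borel_measurable M"
  shows "Measurable.pred M (\<lambda>x. arg_min_on (\<lambda>i. f i x) I = arg_min_on (\<lambda>i. g i x) I)"
proof -
  define minimizers where "minimizers h x = {i \<in> I. \<forall>j\<in>I. h i x \<le> h j x}"
    for h :: "'i \<Rightarrow> 'm \<Rightarrow> 'c" and x
  have arg_min_on: "arg_min_on (\<lambda>i. h i x) I = (SOME i. i \<in> minimizers h x)" for h x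
    unfolding arg_min_on_def arg_min_def is_arg_min_linorder minimizers_def
    by (rule arg_cong[where f = Eps]) auto
  have minimizers_eq: "Measurable.pred M (\<lambda>x. minimizers h x = K)"
    if "K \<subseteq> I" and [measurable]: "\<And>i. i \<in> I \<Longrightarrow> h i \<in> borel_measurable M" for h K
  proof -
    have "minimizers h x = K \<longleftrightarrow> (\<forall>i\<in>I. i \<in> K \<longleftrightarrow> (\<forall>j\<in>I. h i x \<le> h j x))" for x
      using \<open>K \<subseteq> I\<close> by (auto simp: minimizers_def)
    then show ?thesis
      using \<open>finite I\<close> by (simp only:) measurable
  qed
  have "arg_min_on (\<lambda>i. f i x) I = arg_min_on (\<lambda>i. g i x) I \<longleftrightarrow>
      (\<exists>K\<in>Pow I. \<exists>L\<in>Pow I. minimizers f x = K \<and> minimizers g x = L \<and> (SOME i. i \<in> K) = (SOME i. i \<in> L))" for x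
    by (auto simp: arg_min_on minimizers_def)
  then show ?thesis
    using \<open>finite I\<close> minimizers_eq f g by (simp only:) (intro pred_intros_finite pred_intros_logic; auto)
qed

abbreviation Exp1 :: "real measure" where
  "Exp1 \<equiv> density lborel (exponential_density 1)"

lemma prob_space_exp_race_space: "prob_space (exp_race_space \<Omega>)"
  unfolding exp_race_space_def
  by (intro prob_space_PiM prob_space_exponential_density) simp

lemma measurable_exp_race_component:
  "j \<in> \<Omega> \<Longrightarrow> (\<lambda>e. e j) \<in> borel_measurable (exp_race_space \<Omega>)"
  using measurable_component_singleton[of j \<Omega> "\<lambda>_. Exp1"]
  by (simp add: exp_race_space_def measurable_cong_sets[OF refl sets_density])

(* The conjunct 0 <= e i only removes a null set; it keeps the thresholds c_j e_i
   nonnegative, where the exponential tail formula applies. *)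
definition lead_event :: "'a set \<Rightarrow> ('a \<Rightarrow> real) \<Rightarrow> 'a \<Rightarrow> ('a \<Rightarrow> real) set" where
  "lead_event \<Omega> c i = {e \<in> space (exp_race_space \<Omega>). 0 \<le> e i \<and> (\<forall>j\<in>\<Omega>-{i}. c j * e i < e j)}"

lemma sets_lead_event:
  assumes "finite \<Omega>" "i \<in> \<Omega>"
  shows "lead_event \<Omega> c i \<in> sets (exp_race_space \<Omega>)"
proof -
  note [measurable] = measurable_exp_race_component[OF \<open>i \<in> \<Omega>\<close>]
  have [measurable]: "Measurable.pred (exp_race_space \<Omega>) (\<lambda>e. c j * e i < e j)" if "j \<in> \<Omega>" for j
    using measurable_exp_race_component[OF that] by measurable
  show ?thesis unfolding lead_event_def by measurable (use assms in auto)
qed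

lemma emeasure_lead_event:
  assumes fin: "finite \<Omega>" and i: "i \<in> \<Omega>" and c: "\<And>j. j \<in> \<Omega> \<Longrightarrow> 0 \<le> c j"
  shows "emeasure (exp_race_space \<Omega>) (lead_event \<Omega> c i) = ennreal (1 / (1 + (\<Sum>j\<in>\<Omega>-{i}. c j)))"
proof -
  interpret product_sigma_finite "\<lambda>_::'a. Exp1"
    unfolding product_sigma_finite_def
    by (simp add: prob_space_exponential_density prob_space_imp_sigma_finite)
  define \<Omega>' where "\<Omega>' = \<Omega> - {i}"
  have \<Omega>: "\<Omega> = insert i \<Omega>'" "i \<notin> \<Omega>'" "finite \<Omega>'"
    using i fin by (auto simp: \<Omega>'_def)
  have L: "lead_event \<Omega> c i \<in> sets (Pi\<^sub>M (insert i \<Omega>') (\<lambda>_. Exp1))"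
    using sets_lead_event[OF fin i] \<Omega> by (simp add: exp_race_space_def)
  have "emeasure (exp_race_space \<Omega>) (lead_event \<Omega> c i)
      = (\<integral>\<^sup>+t. (\<integral>\<^sup>+x. indicator (lead_event \<Omega> c i) (x(i := t)) \<partial>Pi\<^sub>M \<Omega>' (\<lambda>_. Exp1)) \<partial>Exp1)"
    using \<Omega> L by (simp add: exp_race_space_def product_nn_integral_insert_rev flip: nn_integral_indicator)
  also have "\<dots> = (\<integral>\<^sup>+t. (\<integral>\<^sup>+x. indicator {0..} t * (\<Prod>j\<in>\<Omega>'. indicator {c j * t<..} (x j)) \<partial>Pi\<^sub>M \<Omega>' (\<lambda>_. Exp1)) \<partial>Exp1)"
  proof (intro nn_integral_cong)
    fix t x assume x: "x \<in> space (Pi\<^sub>M \<Omega>' (\<lambda>_. Exp1))"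
    then have "x(i := t) \<in> space (exp_race_space \<Omega>)"
      using \<Omega> by (auto simp: exp_race_space_def space_PiM PiE_def extensional_def)
    with \<Omega> show "indicator (lead_event \<Omega> c i) (x(i := t))
        = indicator {0..} t * (\<Prod>j\<in>\<Omega>'. indicator {c j * t<..} (x j) :: ennreal)"
      by (auto simp: lead_event_def indicator_def prod_zero_iff intro!: prod.neutral)
  qed
  also have "\<dots> = (\<integral>\<^sup>+t. indicator {0..} t * (\<Prod>j\<in>\<Omega>'. emeasure Exp1 {c j * t<..}) \<partial>Exp1)"
    using \<Omega> by (intro nn_integral_cong, subst nn_integral_cmult, measurable, subst product_nn_integral_prod) auto
  also have "\<dots> = (\<integral>\<^sup>+t. exp (- (\<Sum>j\<in>\<Omega>'. c j) * t) \<partial>Exp1)"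
  proof (rule nn_integral_cong_AE)
    have "AE t in Exp1. 0 \<le> t"
      by (subst AE_density) (auto simp: exponential_density_def)
    then show "AE t in Exp1. indicator {0..} t * (\<Prod>j\<in>\<Omega>'. emeasure Exp1 {c j * t<..})
        = ennreal (exp (- (\<Sum>j\<in>\<Omega>'. c j) * t))"
    proof eventually_elim
      case (elim t)
      then have "(\<Prod>j\<in>\<Omega>'. emeasure Exp1 {c j * t<..}) = (\<Prod>j\<in>\<Omega>'. ennreal (exp (- (c j * t))))"
        using c \<Omega> by (intro prod.cong refl) (simp add: emeasure_exponential_density_greaterThan)
      also have "\<dots> = ennreal (exp (- (\<Sum>j\<in>\<Omega>'. c j) * t))"
        using \<open>finite \<Omega>'\<close> by (simp add: prod_ennreal exp_sum sum_distrib_right flip: sum_negf)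
      finally show ?case using elim by simp
    qed
  qed
  also have "\<dots> = ennreal (1 / (1 + (\<Sum>j\<in>\<Omega>'. c j)))"
    using c \<Omega> by (intro nn_integral_exp_exponential_density) (auto intro: sum_nonneg)
  finally show ?thesis by (simp add: \<Omega>'_def)
qed

lemma measure_lead_event:
  assumes "finite \<Omega>" "i \<in> \<Omega>" "\<And>j. j \<in> \<Omega> \<Longrightarrow> 0 \<le> c j"
  shows "measure (exp_race_space \<Omega>) (lead_event \<Omega> c i) = 1 / (1 + (\<Sum>j\<in>\<Omega>-{i}. c j))"
proof -
  have "0 \<le> (\<Sum>j\<in>\<Omega>-{i}. c j)"
    using assms(3) by (auto intro: sum_nonneg)
  with emeasure_lead_event[OF assms] show ?thesis
    by (simp add: measure_def)
qed

lemma lead_event_Int: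
  "lead_event \<Omega> c i \<inter> lead_event \<Omega> d i = lead_event \<Omega> (\<lambda>j. max (c j) (d j)) i"
  by (auto simp: lead_event_def max_mult_distrib_right)

lemma arg_min_on_lead_event:
  assumes "i \<in> \<Omega>" "\<And>j. j \<in> \<Omega> \<Longrightarrow> 0 < w j" "e \<in> lead_event \<Omega> (\<lambda>j. w j / w i) i"
  shows "arg_min_on (\<lambda>j. e j / w j) \<Omega> = i"
proof (rule arg_min_on_eq_strict_min)
  fix j assume "j \<in> \<Omega>" "j \<noteq> i"
  with assms have "w j / w i * e i < e j" "0 < w i" "0 < w j"
    by (auto simp: lead_event_def)
  then show "e i / w i < e j / w j"
    by (simp add: field_simps)
qed fact

lemma disjoint_family_on_lead_event:
  assumes "\<And>j. j \<in> \<Omega> \<Longrightarrow> 0 < w j"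
  shows "disjoint_family_on (\<lambda>i. lead_event \<Omega> (\<lambda>j. w j / w i) i) \<Omega>"
  unfolding disjoint_family_on_def
proof (intro ballI impI)
  fix i k assume "i \<in> \<Omega>" "k \<in> \<Omega>" "i \<noteq> k"
  then show "lead_event \<Omega> (\<lambda>j. w j / w i) i \<inter> lead_event \<Omega> (\<lambda>j. w j / w k) k = {}"
    using arg_min_on_lead_event[of i \<Omega> w] arg_min_on_lead_event[of k \<Omega> w] assms by blast
qed

lemma measure_lead_event_weights:
  assumes "finite \<Omega>" "i \<in> \<Omega>" "\<And>j. j \<in> \<Omega> \<Longrightarrow> 0 < w j" "(\<Sum>j\<in>\<Omega>. w j) = 1"
  shows "measure (exp_race_space \<Omega>) (lead_event \<Omega> (\<lambda>j. w j / w i) i) = w i"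
proof -
  have "0 < w i" using assms by simp
  with assms measure_lead_event[OF assms(1,2), of "\<lambda>j. w j / w i"] show ?thesis
    by (simp add: sum_others_div less_imp_le)
qed

lemma AE_exp_race_has_winner:
  assumes "finite \<Omega>" "\<And>j. j \<in> \<Omega> \<Longrightarrow> 0 < w j" "(\<Sum>j\<in>\<Omega>. w j) = 1"
  shows "AE e in exp_race_space \<Omega>. \<exists>i\<in>\<Omega>. e \<in> lead_event \<Omega> (\<lambda>j. w j / w i) i"
proof -
  interpret prob_space "exp_race_space \<Omega>" by (rule prob_space_exp_race_space)
  let ?W = "\<lambda>i. lead_event \<Omega> (\<lambda>j. w j / w i) i"
  have sets: "?W i \<in> events" if "i \<in> \<Omega>" for i
    using sets_lead_event[OF assms(1) that] .
  have "prob (\<Union>i\<in>\<Omega>. ?W i) = (\<Sum>i\<in>\<Omega>. prob (?W i))"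
    using assms sets disjoint_family_on_lead_event by (intro finite_measure_finite_Union) auto
  also have "\<dots> = 1"
    using assms by (simp add: measure_lead_event_weights)
  finally have "AE e in exp_race_space \<Omega>. e \<in> (\<Union>i\<in>\<Omega>. ?W i)"
    using assms(1) sets by (subst AE_in_set_eq_1) auto
  then show ?thesis by simp
qed

lemma P_accept1_eq:
  assumes "finite \<Omega>"
    and p: "\<And>i. i \<in> \<Omega> \<Longrightarrow> 0 < p i" "(\<Sum>i\<in>\<Omega>. p i) = 1"
    and q: "\<And>i. i \<in> \<Omega> \<Longrightarrow> 0 < q i" "(\<Sum>i\<in>\<Omega>. q i) = 1"
  shows "P_accept1 \<Omega> p q = (\<Sum>i\<in>\<Omega>. 1 / (1 + (\<Sum>j\<in>\<Omega>-{i}. max (p j / p i) (q j / q i))))"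
proof -
  let ?M = "exp_race_space \<Omega>"
  interpret prob_space ?M by (rule prob_space_exp_race_space)
  define A where "A = {e \<in> space ?M. arg_min_on (\<lambda>i. e i / q i) \<Omega> = arg_min_on (\<lambda>i. e i / p i) \<Omega>}"
  define B where "B i = lead_event \<Omega> (\<lambda>j. max (p j / p i) (q j / q i)) i" for i
  have B_eq: "B i = lead_event \<Omega> (\<lambda>j. p j / p i) i \<inter> lead_event \<Omega> (\<lambda>j. q j / q i) i" for i
    by (simp add: B_def lead_event_Int)
  have sets_B: "B i \<in> events" if "i \<in> \<Omega>" for i
    unfolding B_def using \<open>finite \<Omega>\<close> that by (rule sets_lead_event)
  have "A \<in> events"
    unfolding A_def using \<open>finite \<Omega>\<close>
    by (intro pred_arg_min_on_eq[unfolded pred_def]) (auto intro!: borel_measurable_divide measurable_exp_race_component)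
  have "AE e in ?M. \<exists>i\<in>\<Omega>. e \<in> lead_event \<Omega> (\<lambda>j. p j / p i) i"
    using \<open>finite \<Omega>\<close> p by (rule AE_exp_race_has_winner)
  moreover have "AE e in ?M. \<exists>k\<in>\<Omega>. e \<in> lead_event \<Omega> (\<lambda>j. q j / q k) k"
    using \<open>finite \<Omega>\<close> q by (rule AE_exp_race_has_winner)
  ultimately have "AE e in ?M. e \<in> A \<longleftrightarrow> e \<in> (\<Union>i\<in>\<Omega>. B i)"
  proof eventually_elim
    case (elim e)
    then obtain i k where i: "i \<in> \<Omega>" "e \<in> lead_event \<Omega> (\<lambda>j. p j / p i) i"
      and k: "k \<in> \<Omega>" "e \<in> lead_event \<Omega> (\<lambda>j. q j / q k) k"
      by blast
    have wins: "arg_min_on (\<lambda>j. e j / p j) \<Omega> = x \<and> arg_min_on (\<lambda>j. e j / q j) \<Omega> = x"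
      if "x \<in> \<Omega>" "e \<in> B x" for x
      using that arg_min_on_lead_event[of x \<Omega> p e, OF _ p(1)] arg_min_on_lead_event[of x \<Omega> q e, OF _ q(1)]
      by (simp add: B_eq)
    have argp: "arg_min_on (\<lambda>j. e j / p j) \<Omega> = i"
      using i(1) p(1) i(2) by (rule arg_min_on_lead_event)
    have argq: "arg_min_on (\<lambda>j. e j / q j) \<Omega> = k"
      using k(1) q(1) k(2) by (rule arg_min_on_lead_event)
    have "e \<in> (\<Union>x\<in>\<Omega>. B x) \<longleftrightarrow> i = k"
    proof
      assume "e \<in> (\<Union>x\<in>\<Omega>. B x)"
      then obtain x where "x \<in> \<Omega>" "e \<in> B x" by blast
      with wins argp argq show "i = k" by simp
    next
      assume "i = k"
      with i k show "e \<in> (\<Union>x\<in>\<Omega>. B x)" by (auto simp: B_eq)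
    qed
    moreover have "e \<in> space ?M"
      using i by (simp add: lead_event_def)
    ultimately show ?case
      using argp argq by (auto simp: A_def)
  qed
  then have "prob A = prob (\<Union>i\<in>\<Omega>. B i)"
    using \<open>A \<in> events\<close> \<open>finite \<Omega>\<close> sets_B by (intro finite_measure_eq_AE) auto
  also have "\<dots> = (\<Sum>i\<in>\<Omega>. prob (B i))"
    using \<open>finite \<Omega>\<close> sets_B disjoint_family_on_lead_event[of \<Omega> p] p
    by (intro finite_measure_finite_Union) (auto simp: B_eq disjoint_family_on_def)
  also have "\<dots> = (\<Sum>i\<in>\<Omega>. 1 / (1 + (\<Sum>j\<in>\<Omega>-{i}. max (p j / p i) (q j / q i))))"
    using \<open>finite \<Omega>\<close> p q
    by (intro sum.cong refl) (simp add: B_def measure_lead_event less_imp_le max.coboundedI1)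
  finally show ?thesis
    by (simp add: P_accept1_def A_def)
qed

lemma sum_min_eq_one_minus_D_TV:
  assumes "(\<Sum>i\<in>\<Omega>. p i) = 1" "(\<Sum>i\<in>\<Omega>. q i) = 1"
  shows "(\<Sum>i\<in>\<Omega>. min (p i) (q i)) = 1 - D_TV \<Omega> p q"
proof -
  have "(\<Sum>i\<in>\<Omega>. min (p i) (q i)) = (\<Sum>i\<in>\<Omega>. (p i + q i - \<bar>p i - q i\<bar>) / 2)"
    by (intro sum.cong) (auto simp: min_def)
  also have "\<dots> = 1 - D_TV \<Omega> p q"
    using assms by (simp add: D_TV_def sum_subtractf sum.distrib flip: sum_divide_distrib)
  finally show ?thesis .
qed

lemma agreement_probability_bounds:
  fixes p q :: "'a \<Rightarrow> real"
  assumes "finite \<Omega>" "i \<in> \<Omega>"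
    and p: "\<And>j. j \<in> \<Omega> \<Longrightarrow> 0 < p j" "(\<Sum>j\<in>\<Omega>. p j) = 1"
    and q: "\<And>j. j \<in> \<Omega> \<Longrightarrow> 0 < q j" "(\<Sum>j\<in>\<Omega>. q j) = 1"
  defines "S \<equiv> \<Sum>j\<in>\<Omega>-{i}. max (p j / p i) (q j / q i)"
  shows "p i * q i / (p i + q i) \<le> 1 / (1 + S)" and "1 / (1 + S) \<le> min (p i) (q i)"
proof -
  have "0 < p i" "0 < q i" using assms by simp_all
  have sum_p: "(\<Sum>j\<in>\<Omega>-{i}. p j / p i) = 1 / p i - 1"
    using assms(1,2) p(2) by (rule sum_others_div) (use \<open>0 < p i\<close> in simp)
  have sum_q: "(\<Sum>j\<in>\<Omega>-{i}. q j / q i) = 1 / q i - 1"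
    using assms(1,2) q(2) by (rule sum_others_div) (use \<open>0 < q i\<close> in simp)
  have "1 / p i - 1 \<le> S" "1 / q i - 1 \<le> S"
    unfolding S_def sum_p[symmetric] sum_q[symmetric] by (auto intro: sum_mono)
  then have "1 / p i \<le> 1 + S" "1 / q i \<le> 1 + S" by simp_all
  moreover from this have "0 < 1 + S"
    using \<open>0 < p i\<close> by (meson divide_pos_pos less_le_trans zero_less_one)
  ultimately show "1 / (1 + S) \<le> min (p i) (q i)"
    using \<open>0 < p i\<close> \<open>0 < q i\<close> by (simp add: divide_le_eq le_divide_eq mult.commute)
  have "S \<le> (\<Sum>j\<in>\<Omega>-{i}. p j / p i + q j / q i)"
    unfolding S_def using p q \<open>0 < p i\<close> \<open>0 < q i\<close>
    by (intro sum_mono) (auto simp: less_imp_le)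
  also have "\<dots> = 1 / p i + 1 / q i - 2"
    by (simp add: sum.distrib sum_p sum_q)
  finally have "1 + S \<le> 1 / p i + 1 / q i"
    by simp
  also have "\<dots> = (p i + q i) / (p i * q i)"
    using \<open>0 < p i\<close> \<open>0 < q i\<close> by (simp add: field_simps)
  finally have "1 + S \<le> (p i + q i) / (p i * q i)" .
  with \<open>0 < 1 + S\<close> show "p i * q i / (p i + q i) \<le> 1 / (1 + S)"
    using \<open>0 < p i\<close> \<open>0 < q i\<close> by (simp add: divide_le_eq le_divide_eq mult.commute)
qed

theorem lemma1:
  fixes \<Omega> :: "'a set" and p q :: "'a \<Rightarrow> real"
  assumes "finite \<Omega>" and "\<Omega> \<noteq> {}"
    and "\<And>i. i \<in> \<Omega> \<Longrightarrow> p i > 0" and "\<And>i. i \<in> \<Omega> \<Longrightarrow> q i > 0"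
    and "(\<Sum>i\<in>\<Omega>. p i) = 1" and "(\<Sum>i\<in>\<Omega>. q i) = 1"
  shows "1 - D_TV \<Omega> p q \<ge> P_accept1 \<Omega> p q \<and> P_accept1 \<Omega> p q \<ge> D_HM \<Omega> p q"
proof -
  let ?r = "\<lambda>i. 1 / (1 + (\<Sum>j\<in>\<Omega>-{i}. max (p j / p i) (q j / q i)))"
  have accept: "P_accept1 \<Omega> p q = (\<Sum>i\<in>\<Omega>. ?r i)"
    using assms(1,3,5,4,6) by (rule P_accept1_eq)
  have "(\<Sum>i\<in>\<Omega>. ?r i) \<le> (\<Sum>i\<in>\<Omega>. min (p i) (q i))"
    using assms by (intro sum_mono agreement_probability_bounds(2))
  also have "\<dots> = 1 - D_TV \<Omega> p q"
    using assms by (intro sum_min_eq_one_minus_D_TV)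
  finally have "P_accept1 \<Omega> p q \<le> 1 - D_TV \<Omega> p q"
    unfolding accept .
  moreover have "D_HM \<Omega> p q \<le> (\<Sum>i\<in>\<Omega>. ?r i)"
    unfolding D_HM_def using assms by (intro sum_mono agreement_probability_bounds(1))
  ultimately show ?thesis
    unfolding accept by simp
qed

end
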